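(* Let $a>0$, $\beta>0$, let $\lambda$ be feasible, let $0<\xi<a$, let $\rho\in\mathcal{P}$, and suppose $d_0\ge\tau(\beta)a$. Then $\lim_{\delta\to0^+}T_4=0$, where \[ T_4=9C_5\,\delta^{-1/2}(2\delta+\lambda\delta^{\beta})^{-3/2}(\lambda^2\delta^{2\beta}+4)\int_{k_0(\delta)}^{\infty}\mathrm{e}^{-2k(d_0-\frac32a)}\mathrm{e}^{-4ka}\left(\frac{\mathrm{e}^{2k\xi}-1}{k}\right)\mathrm{d}k,\qquad C_5=\frac{(d_1-d_0)\|\rho\|^2_{L^2(\mathcal{M})}}{9\pi}. \]
   Context: For $0<\delta<1$ and constants $\beta>0$, $\lambda\in\mathbb{R}$, put $\mu=\delta+\lambda\delta^{\beta}$. The constant $\lambda$ is feasible if $\lambda>0$ when $0<\beta<1$, $\lambda\ge-1$ when $\beta=1$, $\lambda\ne0$ when $\beta>1$; $\delta_\mu\in(0,1)$ is a number with $\mu\ge0$ for $0<\delta\le\delta_\mu$. $k_0(\delta)=\frac{1}{2a}\ln\left(\frac{1}{2\delta^2+\lambda\delta^{\beta+1}}\right)$, and $\delta$ ranges over $0<\delta\le\delta_0$, where $0<\delta_0\le\delta_\mu$ is such that $k_0(\delta)>0$ for $0<\delta\le\delta_0$. $\tau(\beta)=\frac{\beta+2}{\beta+1}$ for $0<\beta<1$ and $\tau(\beta)=\frac32$ for $\beta\ge1$. Let $\mathcal{M}=\{(x,y):x>a\}$; $\mathcal{P}$ is the set of real-valued $\rho\in L^2(\mathcal{M})\cap L^\infty(\mathcal{M})$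 with compact support in $\mathcal{M}$, $0<|\operatorname{supp}\rho|<\infty$, and $\int\!\!\int\rho=0$; $d_0=\min\{x:(x,y)\in\operatorname{supp}\rho\}$, $d_1=\max\{x:(x,y)\in\operatorname{supp}\rho\}$. *)

theory Defs
  imports "HOL-Analysis.Analysis"
begin

definition feasible :: "real \<Rightarrow> real \<Rightarrow> bool" where
  "feasible \<beta> lam \<longleftrightarrow>
     (0 < \<beta> \<and> \<beta> < 1 \<longrightarrow> lam > 0) \<and>
     (\<beta> = 1 \<longrightarrow> lam \<ge> -1) \<and>
     (\<beta> > 1 \<longrightarrow> lam \<noteq> 0)"

definition tau :: "real \<Rightarrow> real" where
  "tau \<beta> = (if \<beta> < 1 then (\<beta> + 2) / (\<beta> + 1) else 3 / 2)"

definition k0 :: "real \<Rightarrow> real \<Rightarrow> real \<Rightarrow> real \<Rightarrow> real" where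
  "k0 a \<beta> lam \<delta> = 1 / (2 * a) * ln (1 / (2 * \<delta>\<^sup>2 + lam * \<delta> powr (\<beta> + 1)))"

definition supp :: "(real \<times> real \<Rightarrow> real) \<Rightarrow> (real \<times> real) set" where
  "supp \<rho> = closure {p. \<rho> p \<noteq> 0}"

text \<open>The class P relative to the half plane M = {(x,y). x > a}.\<close>
definition classP :: "real \<Rightarrow> (real \<times> real \<Rightarrow> real) \<Rightarrow> bool" where
  "classP a \<rho> \<longleftrightarrow>
     \<rho> \<in> borel_measurable lborel \<and>
     integrable lborel (\<lambda>p. (\<rho> p)\<^sup>2) \<and>
     (\<exists>C. AE p in lborel. \<bar>\<rho> p\<bar> \<le> C) \<and>
     compact (supp \<rho>) \<and> supp \<rho> \<subseteq> {p. fst p > a} \<and>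
     0 < emeasure lborel (supp \<rho>) \<and> emeasure lborel (supp \<rho>) < \<infinity> \<and>
     integrable lborel \<rho> \<and> integral\<^sup>L lborel \<rho> = 0"

definition d0 :: "(real \<times> real \<Rightarrow> real) \<Rightarrow> real" where
  "d0 \<rho> = Inf (fst ` supp \<rho>)"

definition d1 :: "(real \<times> real \<Rightarrow> real) \<Rightarrow> real" where
  "d1 \<rho> = Sup (fst ` supp \<rho>)"

definition L2norm_sq :: "(real \<times> real \<Rightarrow> real) \<Rightarrow> real" where
  "L2norm_sq \<rho> = integral\<^sup>L lborel (\<lambda>p. (\<rho> p)\<^sup>2)"

definition C5 :: "(real \<times> real \<Rightarrow> real) \<Rightarrow> real" where
  "C5 \<rho> = (d1 \<rho> - d0 \<rho>) * L2norm_sq \<rho> / (9 * pi)"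

definition T4 :: "real \<Rightarrow> real \<Rightarrow> real \<Rightarrow> real \<Rightarrow> (real \<times> real \<Rightarrow> real) \<Rightarrow> real \<Rightarrow> real" where
  "T4 a \<beta> lam \<xi> \<rho> \<delta> =
     9 * C5 \<rho> * \<delta> powr (-1/2) * (2 * \<delta> + lam * \<delta> powr \<beta>) powr (-3/2)
       * (lam\<^sup>2 * \<delta> powr (2 * \<beta>) + 4)
       * (LBINT k:{k0 a \<beta> lam \<delta>..}.
            exp (-2 * k * (d0 \<rho> - 3/2 * a)) * exp (-4 * k * a) * ((exp (2 * k * \<xi>) - 1) / k))"

end

theory Submission
  imports Defs
begin

text \<open>
  Write \<open>m = min \<beta> 1\<close>. Feasibility of \<open>\<lambda>\<close> gives \<open>2\<delta> + \<lambda>\<delta>\<^sup>\<beta> = \<delta>\<^sup>m w(\<delta>)\<close> with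
  \<open>w(\<delta>) \<rightarrow> L > 0\<close>, hence \<open>s = 2\<delta>\<^sup>2 + \<lambda>\<delta>\<^sup>\<beta>\<^sup>+\<^sup>1 = \<delta>\<^sup>1\<^sup>+\<^sup>m w(\<delta>)\<close>. Since
  \<open>(e\<^sup>2\<^sup>k\<^sup>\<xi> - 1)/k \<le> 2\<xi> e\<^sup>2\<^sup>k\<^sup>\<xi>\<close>, the integral is at most \<open>2\<xi> e\<^sup>-\<^sup>c\<^sup>k\<^sup>0/c\<close> with
  \<open>c = 2d\<^sub>0 + a - 2\<xi>\<close>, and \<open>e\<^sup>-\<^sup>c\<^sup>k\<^sup>0 = s\<^sup>p\<close> for \<open>p = c/(2a)\<close>. So \<open>T\<^sub>4\<close> is bounded
  by a constant times \<open>\<delta>\<^sup>e w(\<delta>)\<^sup>p\<^sup>-\<^sup>3\<^sup>/\<^sup>2\<close> with \<open>e = (1+m)p - 1/2 - 3m/2\<close>, and the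
  hypothesis \<open>d\<^sub>0 \<ge> \<tau>(\<beta>) a\<close> is exactly what makes \<open>e > 0\<close>.
\<close>

lemma exp_minus_one_le_mult_exp: "exp x - 1 \<le> x * exp (x::real)"
proof -
  have "exp x * (1 - x) \<le> exp x * exp (-x)"
    using exp_ge_add_one_self[of "-x"] by (intro mult_left_mono) auto
  then show ?thesis by (simp add: exp_minus field_simps)
qed

lemma
  fixes c x0 :: real
  assumes "c > 0"
  shows set_integrable_exp_neg_tail: "set_integrable lborel {x0..} (\<lambda>x. exp (-c*x))"
    and set_integral_exp_neg_tail: "(LBINT x:{x0..}. exp (-c*x)) = exp (-c*x0) / c"
proof -
  have "(\<lambda>x. exp (-c*x)) absolutely_integrable_on {x0..}"
    using assms by (intro nonnegative_absolutely_integrable_1 integrable_on_exp_minus_to_infinity) auto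
  moreover have m: "(\<lambda>x. indicat_real {x0..} x *\<^sub>R exp (-c*x)) \<in> borel_measurable lborel"
    unfolding measurable_lborel2
    by (intro borel_measurable_continuous_on_indicator) (auto intro!: continuous_intros)
  ultimately show si: "set_integrable lborel {x0..} (\<lambda>x. exp (-c*x))"
    unfolding set_integrable_def using integrable_completion[OF m] by simp
  show "(LBINT x:{x0..}. exp (-c*x)) = exp (-c*x0) / c"
    using set_borel_integral_eq_integral(2)[OF si] has_integral_exp_minus_to_infinity[OF assms, of x0]
    by (simp add: integral_unique)
qed

lemma T4_integrand_bounds:
  fixes a d \<xi> k :: real
  assumes "k > 0" "\<xi> > 0"
  defines "f \<equiv> exp (-2 * k * (d - 3/2 * a)) * exp (-4 * k * a) * ((exp (2 * k * \<xi>) - 1) / k)"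
  shows "0 \<le> f" and "f \<le> 2 * \<xi> * exp (- (2*d + a - 2*\<xi>) * k)"
proof -
  show "0 \<le> f"
    using assms by (auto simp: f_def intro!: mult_nonneg_nonneg divide_nonneg_pos)
  have "(exp (2*k*\<xi>) - 1) / k \<le> 2 * \<xi> * exp (2*k*\<xi>)"
    using exp_minus_one_le_mult_exp[of "2*k*\<xi>"] \<open>k > 0\<close> by (simp add: divide_simps mult_ac)
  then have "f \<le> exp (-2 * k * (d - 3/2 * a)) * exp (-4 * k * a) * (2 * \<xi> * exp (2*k*\<xi>))"
    unfolding f_def by (rule mult_left_mono) simp
  also have "\<dots> = 2 * \<xi> * exp (-2 * k * (d - 3/2 * a) + -4 * k * a + 2*k*\<xi>)"
    by (simp only: exp_add) (simp add: mult_ac)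
  finally show "f \<le> 2 * \<xi> * exp (- (2*d + a - 2*\<xi>) * k)"
    by (simp add: algebra_simps)
qed

lemma T4_integral_bounds:
  fixes a d \<xi> k0 :: real
  assumes "k0 > 0" "\<xi> > 0" and c: "c = 2*d + a - 2*\<xi>" "c > 0"
  defines "I \<equiv> LBINT k:{k0..}. exp (-2 * k * (d - 3/2 * a)) * exp (-4 * k * a) * ((exp (2 * k * \<xi>) - 1) / k)"
  shows "0 \<le> I" and "I \<le> 2 * \<xi> * exp (-c*k0) / c"
proof -
  note bounds = T4_integrand_bounds[OF _ \<open>\<xi> > 0\<close>, of _ d a]
  show "0 \<le> I"
    unfolding I_def set_lebesgue_integral_def
    by (rule integral_nonneg_AE, rule AE_I2) (use bounds(1) \<open>k0 > 0\<close> in \<open>auto simp: indicator_def\<close>)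
  have dom: "integrable lborel (\<lambda>k. 2 * \<xi> * (indicat_real {k0..} k *\<^sub>R exp (-c*k)))"
    using set_integrable_exp_neg_tail[OF \<open>c > 0\<close>, of k0] unfolding set_integrable_def
    by (rule integrable_mult_right)
  have "I \<le> integral\<^sup>L lborel (\<lambda>k. 2 * \<xi> * (indicat_real {k0..} k *\<^sub>R exp (-c*k)))"
    unfolding I_def set_lebesgue_integral_def
    by (rule integral_mono'[OF dom])
       (use bounds(2) \<open>k0 > 0\<close> \<open>\<xi> > 0\<close> c in \<open>auto simp: indicator_def\<close>)
  also have "\<dots> = 2 * \<xi> * (LBINT k:{k0..}. exp (-c*k))"
    unfolding set_lebesgue_integral_def by simp
  finally show "I \<le> 2 * \<xi> * exp (-c*k0) / c"
    using set_integral_exp_neg_tail[OF \<open>c > 0\<close>, of k0] by simp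
qed

lemma eventually_nonneg_at_right_0: "eventually (\<lambda>x::real. 0 \<le> x) (at_right 0)"
  using eventually_at_right_less[of "0::real"] by eventually_elim simp

lemma feasible_speed_factorization:
  assumes "\<beta> > 0" "feasible \<beta> lam"
  obtains w L where "L > 0" "(w \<longlongrightarrow> L) (at_right 0)"
    and "\<And>\<delta>::real. \<delta> > 0 \<Longrightarrow> 2*\<delta> + lam * \<delta> powr \<beta> = \<delta> powr (min \<beta> 1) * w \<delta>"
proof -
  define w where "w = (\<lambda>\<delta>::real. if \<beta> < 1 then 2 * \<delta> powr (1-\<beta>) + lam else 2 + lam * \<delta> powr (\<beta>-1))"
  define L where "L = (if \<beta> < 1 then lam else if \<beta> = 1 then 2 + lam else 2)"
  have "L > 0" using assms by (auto simp: L_def feasible_def)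
  moreover have "(w \<longlongrightarrow> L) (at_right 0)"
  proof (cases "\<beta> < 1")
    case True
    have "((\<lambda>\<delta>::real. 2 * \<delta> powr (1-\<beta>) + lam) \<longlongrightarrow> 2*0 + lam) (at_right 0)"
      using True by (intro tendsto_intros tendsto_zero_powrI) (auto simp: eventually_nonneg_at_right_0)
    then show ?thesis using True by (simp add: w_def L_def)
  next
    case False
    have "(w \<longlongrightarrow> 2 + lam) (at_right 0)" if "\<beta> = 1"
    proof (rule Lim_transform_eventually[OF tendsto_const])
      show "\<forall>\<^sub>F \<delta> in at_right 0. 2 + lam = w \<delta>"
        using eventually_at_right_less[of "0::real"] by eventually_elim (simp add: w_def that)
    qed
    moreover have "((\<lambda>\<delta>::real. 2 + lam * \<delta> powr (\<beta>-1)) \<longlongrightarrow> 2 + lam*0) (at_right 0)" if "\<beta> > 1"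
      using that by (intro tendsto_intros tendsto_zero_powrI) (auto simp: eventually_nonneg_at_right_0)
    ultimately show ?thesis using False by (auto simp: w_def L_def)
  qed
  moreover have "2*\<delta> + lam * \<delta> powr \<beta> = \<delta> powr (min \<beta> 1) * w \<delta>" if "\<delta> > 0" for \<delta> :: real
  proof (cases "\<beta> < 1")
    case True
    have "\<delta> powr \<beta> * \<delta> powr (1-\<beta>) = \<delta>" using that by (simp add: powr_add[symmetric])
    then show ?thesis using True by (simp add: w_def algebra_simps)
  next
    case False
    have "\<delta> powr \<beta> = \<delta> powr (1 + (\<beta>-1))" by simp
    also have "\<dots> = \<delta> powr 1 * \<delta> powr (\<beta>-1)" by (rule powr_add)
    finally show ?thesis using False that by (simp add: w_def algebra_simps)
  qed
  ultimately show thesis using that by blast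
qed

lemma tau_exponent_pos:
  fixes a \<beta> d \<xi> :: real
  assumes "a > 0" "\<beta> > 0" "\<xi> < a" "d \<ge> tau \<beta> * a"
  defines "p \<equiv> (2*d + a - 2*\<xi>) / (2*a)" and "m \<equiv> min \<beta> 1"
  shows "(1 + m) * p - 1/2 - 3*m/2 > 0"
proof -
  have "p = d/a + 1/2 - \<xi>/a" using \<open>a > 0\<close> by (simp add: p_def field_simps)
  moreover have "d/a \<ge> tau \<beta>" using assms by (simp add: field_simps)
  moreover have "\<xi>/a < 1" using assms by simp
  ultimately have p: "p > tau \<beta> - 1/2" by linarith
  show ?thesis
  proof (cases "\<beta> < 1")
    case True
    have "(1 + \<beta>) * p > (1 + \<beta>) * ((\<beta> + 3) / (2*(\<beta> + 1)))"
      using p True \<open>\<beta> > 0\<close> by (intro mult_strict_left_mono) (auto simp: tau_def field_simps)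
    also have "(1 + \<beta>) * ((\<beta> + 3) / (2*(\<beta> + 1))) = (\<beta> + 3) / 2"
      using \<open>\<beta> > 0\<close> by (simp add: field_simps)
    finally show ?thesis using True by (simp add: m_def)
  qed (use p in \<open>auto simp: m_def tau_def\<close>)
qed

lemma tendsto_powr_dominant_zero:
  fixes w :: "real \<Rightarrow> real"
  assumes "(w \<longlongrightarrow> L) (at_right 0)" "L > 0" "e > 0" "\<beta> > 0"
  shows "((\<lambda>\<delta>. K * (lam\<^sup>2 * \<delta> powr (2*\<beta>) + 4) * \<delta> powr e * w \<delta> powr q) \<longlongrightarrow> 0) (at_right 0)"
proof -
  have "((\<lambda>\<delta>::real. \<delta> powr r) \<longlongrightarrow> 0) (at_right 0)" if "r > 0" for r :: real
    by (rule tendsto_zero_powrI[OF tendsto_ident_at tendsto_const eventually_nonneg_at_right_0 that])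
  then have "((\<lambda>\<delta>. K * (lam\<^sup>2 * \<delta> powr (2*\<beta>) + 4) * \<delta> powr e * w \<delta> powr q)
               \<longlongrightarrow> K * (lam\<^sup>2 * 0 + 4) * 0 * L powr q) (at_right 0)"
    using assms by (intro tendsto_intros) auto
  then show ?thesis by simp
qed

lemma norm_T4_le:
  fixes a \<beta> lam \<xi> \<delta> :: real and \<rho> :: "real \<times> real \<Rightarrow> real"
  assumes "a > 0" "\<xi> > 0" "\<delta> > 0"
    and c: "c = 2 * d0 \<rho> + a - 2*\<xi>" "c > 0"
    and s: "s = 2*\<delta>\<^sup>2 + lam * \<delta> powr (\<beta>+1)" "0 < s" "s < 1"
  shows "norm (T4 a \<beta> lam \<xi> \<rho> \<delta>) \<le> 9 * \<bar>C5 \<rho>\<bar> * 2 * \<xi> / c * (lam\<^sup>2 * \<delta> powr (2*\<beta>) + 4)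
           * (\<delta> powr (-1/2) * (2*\<delta> + lam * \<delta> powr \<beta>) powr (-3/2) * s powr (c / (2*a)))"
proof -
  define I where "I = (LBINT k:{k0 a \<beta> lam \<delta>..}.
      exp (-2 * k * (d0 \<rho> - 3/2 * a)) * exp (-4 * k * a) * ((exp (2 * k * \<xi>) - 1) / k))"
  define A where "A = \<delta> powr (-1/2) * (2*\<delta> + lam * \<delta> powr \<beta>) powr (-3/2) * (lam\<^sup>2 * \<delta> powr (2*\<beta>) + 4)"
  have k0: "k0 a \<beta> lam \<delta> = ln (1/s) / (2*a)"
    using s(1) by (simp add: k0_def)
  have "k0 a \<beta> lam \<delta> > 0"
    unfolding k0 using s \<open>a > 0\<close> ln_less_zero[of s] by (simp add: ln_div divide_neg_pos)
  note I_bounds = T4_integral_bounds[OF this \<open>\<xi> > 0\<close> c, folded I_def]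
  have "exp (-c * k0 a \<beta> lam \<delta>) = s powr (c / (2*a))"
    unfolding k0 using s \<open>a > 0\<close> by (simp add: powr_def ln_div)
  moreover have "A \<ge> 0" unfolding A_def by (intro mult_nonneg_nonneg) (auto intro: add_nonneg_pos)
  moreover have "T4 a \<beta> lam \<xi> \<rho> \<delta> = 9 * C5 \<rho> * A * I"
    unfolding T4_def I_def A_def by (simp add: mult_ac)
  ultimately have "norm (T4 a \<beta> lam \<xi> \<rho> \<delta>) = 9 * \<bar>C5 \<rho>\<bar> * A * I"
    using I_bounds(1) by (simp add: abs_mult)
  also have "\<dots> \<le> 9 * \<bar>C5 \<rho>\<bar> * A * (2 * \<xi> * s powr (c / (2*a)) / c)"
    using I_bounds(2) \<open>A \<ge> 0\<close> \<open>exp (-c * k0 a \<beta> lam \<delta>) = _\<close> by (intro mult_left_mono) auto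
  finally show ?thesis using c(2) by (simp add: A_def field_simps)
qed

lemma powr_collect_exponents:
  fixes \<delta> w m p :: real
  assumes "\<delta> > 0" "w > 0"
  shows "\<delta> powr (-1/2) * (\<delta> powr m * w) powr (-3/2) * (\<delta> powr (1+m) * w) powr p
           = \<delta> powr ((1+m)*p - 1/2 - 3*m/2) * w powr (p - 3/2)"
proof -
  have "\<delta> powr (-1/2) * (\<delta> powr m * w) powr (-3/2) * (\<delta> powr (1+m) * w) powr p
          = (\<delta> powr (-1/2) * \<delta> powr (m*(-3/2)) * \<delta> powr ((1+m)*p)) * (w powr (-3/2) * w powr p)"
    using assms by (simp add: powr_mult powr_powr mult_ac)
  also have "\<dots> = \<delta> powr ((1+m)*p - 1/2 - 3*m/2) * w powr (p - 3/2)"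
    by (simp add: powr_add[symmetric] algebra_simps)
  finally show ?thesis .
qed

lemma norm_T4_eventually_le:
  fixes a lam \<xi> c m :: real and w :: "real \<Rightarrow> real"
  assumes "a > 0" "\<xi> > 0" "m > 0" "L > 0" and w: "(w \<longlongrightarrow> L) (at_right 0)"
    and speed: "\<And>\<delta>. \<delta> > 0 \<Longrightarrow> 2*\<delta> + lam * \<delta> powr \<beta> = \<delta> powr m * w \<delta>"
    and c: "c = 2 * d0 \<rho> + a - 2*\<xi>" "c > 0"
  defines "p \<equiv> c / (2*a)"
  shows "\<forall>\<^sub>F \<delta> in at_right 0. norm (T4 a \<beta> lam \<xi> \<rho> \<delta>)
           \<le> 9 * \<bar>C5 \<rho>\<bar> * 2 * \<xi> / c * (lam\<^sup>2 * \<delta> powr (2*\<beta>) + 4)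
             * \<delta> powr ((1+m)*p - 1/2 - 3*m/2) * w \<delta> powr (p - 3/2)"
proof -
  have s: "2*\<delta>\<^sup>2 + lam * \<delta> powr (\<beta>+1) = \<delta> powr (1+m) * w \<delta>" if "\<delta> > 0" for \<delta> :: real
  proof -
    have "2*\<delta>\<^sup>2 + lam * \<delta> powr (\<beta>+1) = \<delta> * (2*\<delta> + lam * \<delta> powr \<beta>)"
      using that by (simp add: powr_add power2_eq_square algebra_simps)
    then show ?thesis using speed[OF that] that by (simp add: powr_add)
  qed
  have "((\<lambda>\<delta>::real. \<delta> powr (1+m)) \<longlongrightarrow> 0) (at_right 0)"
    by (rule tendsto_zero_powrI[OF tendsto_ident_at tendsto_const eventually_nonneg_at_right_0])
       (use \<open>m > 0\<close> in simp)
  from tendsto_mult[OF this w] have "((\<lambda>\<delta>. \<delta> powr (1+m) * w \<delta>) \<longlongrightarrow> 0 * L) (at_right 0)" .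
  then have "\<forall>\<^sub>F \<delta> in at_right 0. 0 < \<delta> \<and> 0 < w \<delta> \<and> \<delta> powr (1+m) * w \<delta> < 1"
    using order_tendstoD(1)[OF w \<open>L > 0\<close>] eventually_at_right_less[of "0::real"]
          order_tendstoD(2)[of _ "0 * L" _ 1]
    by (auto simp: eventually_conj_iff)
  then show ?thesis
  proof eventually_elim
    case (elim \<delta>)
    then have "0 < \<delta>" "0 < w \<delta>" by auto
    have "norm (T4 a \<beta> lam \<xi> \<rho> \<delta>) \<le> 9 * \<bar>C5 \<rho>\<bar> * 2 * \<xi> / c * (lam\<^sup>2 * \<delta> powr (2*\<beta>) + 4)
            * (\<delta> powr (-1/2) * (\<delta> powr m * w \<delta>) powr (-3/2) * (\<delta> powr (1+m) * w \<delta>) powr p)"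
      using norm_T4_le[where lam=lam and \<beta>=\<beta>, OF assms(1,2) \<open>0 < \<delta>\<close> c refl,
                       unfolded s[OF \<open>0 < \<delta>\<close>] speed[OF \<open>0 < \<delta>\<close>]] elim
      by (simp add: p_def)
    then show ?case
      unfolding powr_collect_exponents[OF \<open>0 < \<delta>\<close> \<open>0 < w \<delta>\<close>] by (simp add: mult_ac)
  qed
qed

theorem lemma5p5:
  fixes a \<beta> lam \<xi> :: real and \<rho> :: "real \<times> real \<Rightarrow> real"
  assumes "a > 0" and "\<beta> > 0" and "feasible \<beta> lam"
    and "0 < \<xi>" and "\<xi> < a"
    and "classP a \<rho>"
    and "d0 \<rho> \<ge> tau \<beta> * a"
  shows "(T4 a \<beta> lam \<xi> \<rho> \<longlongrightarrow> 0) (at_right 0)"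
proof -
  obtain w L where "L > 0" and w: "(w \<longlongrightarrow> L) (at_right 0)"
    and speed: "\<And>\<delta>::real. \<delta> > 0 \<Longrightarrow> 2*\<delta> + lam * \<delta> powr \<beta> = \<delta> powr (min \<beta> 1) * w \<delta>"
    using feasible_speed_factorization[OF assms(2,3)] by blast
  define c where "c = 2 * d0 \<rho> + a - 2*\<xi>"
  have "tau \<beta> \<ge> 3/2" using \<open>\<beta> > 0\<close> by (auto simp: tau_def field_simps)
  then have "tau \<beta> * a \<ge> 3/2 * a" using \<open>a > 0\<close> by (intro mult_right_mono) auto
  then have "c > 0" unfolding c_def using assms(1,5,7) by linarith
  have e: "(1 + min \<beta> 1) * (c / (2*a)) - 1/2 - 3 * min \<beta> 1 / 2 > 0"
    unfolding c_def using tau_exponent_pos assms(1,2,5,7) .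
  have m: "min \<beta> 1 > 0" using \<open>\<beta> > 0\<close> by simp
  show ?thesis
    using norm_T4_eventually_le[OF assms(1,4) m \<open>L > 0\<close> w speed c_def \<open>c > 0\<close>]
          tendsto_powr_dominant_zero[OF w \<open>L > 0\<close> e \<open>\<beta> > 0\<close>]
    by (rule Lim_null_comparison)
qed

end
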